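(* Consider an $N$-player distributionally robust game (as defined in the context) with ambiguity set $\mathcal{F}$, and suppose every player is risk neutral, i.e. $\varepsilon_i = 1$ for all $i \in \{1,\dots,N\}$. Then: (1) If $\mathcal{F} = \{ Q : \mathbb{E}_Q[\tilde{\mathbf{P}}] = \boldsymbol{\Psi}\}$ for a fixed matrix $\boldsymbol{\Psi}\in\mathbb{R}^{N\times\prod_{k=1}^N a_k}$, then the set of Distributionally Robust Optimization Equilibria of the game coincides with the set of Nash equilibria of the complete information game with payoff matrix $\boldsymbol{\Psi}$. (2) If the ambiguity set is a singleton, $\mathcal{F} = \{Q\}$, then the set of Distributionally Robust Optimization Equilibria coincides with the set of Bayesian Nash equilibria of the Bayesian game in which $\tilde{\mathbf{P}}$ has distribution $Q$. (3) If $\mathcal{F} = \{ Q : Q[\mathbf{W}\cdot \mathrm{vec}(\mathbb{E}_Q[\tilde{\mathbf{P}}]) \le \mathbf{h}] = 1\}$, then the set of Distributionally Robust Optimization Equilibria coincides with the set of Robust Optimization Equilibria of the robust game with uncertainty set $\mathcal{U} = \{\mathbf{P} : \mathbf{W}\cdot\mathrm{vec}(\mathbf{P}) \le \mathbf{h}\}$.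
   Context: A finite $N$-player game: player $i$ has actions $\{1,\dots,a_i\}$ and mixed strategy set $S_{a_i} = \{\mathbf{x}^i\in\mathbb{R}^{a_i} : \mathbf{x}^i\ge 0,\ \sum_{j=1}^{a_i} x^i_j = 1\}$; $S=\prod_{i} S_{a_i}$. A payoff matrix $\mathbf{P}\in\mathbb{R}^{N\times\prod_{k=1}^N a_k}$ has entries $\mathbf{P}^i_{(j_1,\dots,j_N)}$, the payoff to player $i$ when each player $k$ plays action $j_k$. The expected payoff is $\pi_i(\mathbf{P};\mathbf{x}^1,\dots,\mathbf{x}^N) = \sum_{j_1=1}^{a_1}\cdots\sum_{j_N=1}^{a_N}\mathbf{P}^i_{(j_1,\dots,j_N)}\prod_{k=1}^N x^k_{j_k}$. Write $\mathbf{x}^{-i}$ for the strategies of all players except $i$, and $(\mathbf{x}^{-i},\mathbf{u}^i)$ for the profile with $\mathbf{x}^i$ replaced by $\mathbf{u}^i$. $\mathrm{vec}(\mathbf{A})$ is the column vector obtained by stacking the rows of $\mathbf{A}$. $\tilde{\mathbf{P}}$ denotes a random payoff matrix. For a loss random variable $L$ and $\varepsilon\in(0,1]$, $Q\text{-CVaR}_\varepsilon(L) = \min_{\zeta\in\mathbb{R}} \zeta + \frac{1}{\varepsilon}\mathbb{E}_Q[L-\zeta]^+$, with $[x]^+=\max\{x,0\}$. Distributionally robust game: there is a commonly known ambiguity set $\mathcal{F}$ of probability distributions $Q$ of $\tilde{\mathbf{P}}$ and each player $i$ has a risk level $\varepsilon_i\in(0,1]$. A profile $(\mathbf{x}^1,\dots,\mathbf{x}^N)\in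 S$ is a Distributionally Robust Optimization Equilibrium iff for every $i$, $\mathbf{x}^i\in\arg\min_{\mathbf{u}^i\in S_{a_i}}\sup_{Q\in\mathcal{F}} Q\text{-CVaR}_{\varepsilon_i}[-\pi_i(\tilde{\mathbf{P}};\mathbf{x}^{-i},\mathbf{u}^i)]$. Nash equilibrium of the game with fixed payoff matrix $\check{\mathbf{P}}$: for every $i$, $\mathbf{x}^i\in\arg\max_{\mathbf{u}^i\in S_{a_i}}\pi_i(\check{\mathbf{P}};\mathbf{x}^{-i},\mathbf{u}^i)$. Bayesian Nash equilibrium (with $\tilde{\mathbf{P}}$ distributed according to a known distribution): for every $i$, $\mathbf{x}^i\in\arg\max_{\mathbf{u}^i\in S_{a_i}}\mathbb{E}[\pi_i(\tilde{\mathbf{P}};\mathbf{x}^{-i},\mathbf{u}^i)]$. Robust Optimization Equilibrium with uncertainty set $\mathcal{U}$: for every $i$, $\mathbf{x}^i\in\arg\max_{\mathbf{u}^i\in S_{a_i}}\inf_{\tilde{\mathbf{P}}\in\mathcal{U}}\pi_i(\tilde{\mathbf{P}};\mathbf{x}^{-i},\mathbf{u}^i)$. *)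

theory Defs
  imports "HOL-Probability.Probability"
begin

text \<open>Players are 1..N, player k has actions 1..a k. A payoff matrix assigns a real to each
index (i, j) with i a player and j a pure profile; it is an element of the product space
over the index set idx N a.\<close>

type_synonym pmat = "nat \<times> (nat \<Rightarrow> nat) \<Rightarrow> real"
type_synonym mixed = "nat \<Rightarrow> nat \<Rightarrow> real"

definition profiles :: "nat \<Rightarrow> (nat \<Rightarrow> nat) \<Rightarrow> (nat \<Rightarrow> nat) set" where
  "profiles N a = PiE {1..N} (\<lambda>k. {1..a k})"

definition idx :: "nat \<Rightarrow> (nat \<Rightarrow> nat) \<Rightarrow> (nat \<times> (nat \<Rightarrow> nat)) set" where
  "idx N a = {1..N} \<times> profiles N a"

definition strat_simplex :: "nat \<Rightarrow> (nat \<Rightarrow> real) set" where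
  "strat_simplex n = {v. (\<forall>j\<in>{1..n}. 0 \<le> v j) \<and> (\<Sum>j=1..n. v j) = 1}"

definition strat_profiles :: "nat \<Rightarrow> (nat \<Rightarrow> nat) \<Rightarrow> mixed set" where
  "strat_profiles N a = {x. \<forall>i\<in>{1..N}. x i \<in> strat_simplex (a i)}"

definition payoff :: "nat \<Rightarrow> (nat \<Rightarrow> nat) \<Rightarrow> pmat \<Rightarrow> nat \<Rightarrow> mixed \<Rightarrow> real" where
  "payoff N a P i x = (\<Sum>j\<in>profiles N a. P (i, j) * (\<Prod>k=1..N. x k (j k)))"

definition pmat_space :: "nat \<Rightarrow> (nat \<Rightarrow> nat) \<Rightarrow> pmat measure" where
  "pmat_space N a = PiM (idx N a) (\<lambda>_. borel)"

definition matrices :: "nat \<Rightarrow> (nat \<Rightarrow> nat) \<Rightarrow> pmat set" where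
  "matrices N a = space (pmat_space N a)"

definition distr_on :: "pmat measure \<Rightarrow> pmat measure \<Rightarrow> bool" where
  "distr_on M Q \<longleftrightarrow> prob_space Q \<and> sets Q = sets M"

definition has_mean :: "nat \<Rightarrow> (nat \<Rightarrow> nat) \<Rightarrow> pmat measure \<Rightarrow> bool" where
  "has_mean N a Q \<longleftrightarrow> (\<forall>x\<in>idx N a. integrable Q (\<lambda>P. P x))"

definition mean :: "nat \<Rightarrow> (nat \<Rightarrow> nat) \<Rightarrow> pmat measure \<Rightarrow> pmat" where
  "mean N a Q = (\<lambda>x\<in>idx N a. \<integral>P. P x \<partial>Q)"

definition cvar :: "'a measure \<Rightarrow> real \<Rightarrow> ('a \<Rightarrow> real) \<Rightarrow> real" where
  "cvar Q \<epsilon> L = (INF \<zeta>. \<zeta> + (1 / \<epsilon>) * (\<integral>\<omega>. max (L \<omega> - \<zeta>) 0 \<partial>Q))"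

definition DROE :: "nat \<Rightarrow> (nat \<Rightarrow> nat) \<Rightarrow> pmat measure set \<Rightarrow> (nat \<Rightarrow> real) \<Rightarrow> mixed set" where
  "DROE N a F \<epsilon> = {x \<in> strat_profiles N a. \<forall>i\<in>{1..N}. \<forall>u\<in>strat_simplex (a i).
      (SUP Q\<in>F. ereal (cvar Q (\<epsilon> i) (\<lambda>P. - payoff N a P i (x(i := x i)))))
        \<le> (SUP Q\<in>F. ereal (cvar Q (\<epsilon> i) (\<lambda>P. - payoff N a P i (x(i := u)))))}"

definition NE :: "nat \<Rightarrow> (nat \<Rightarrow> nat) \<Rightarrow> pmat \<Rightarrow> mixed set" where
  "NE N a \<Psi> = {x \<in> strat_profiles N a. \<forall>i\<in>{1..N}. \<forall>u\<in>strat_simplex (a i).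
      payoff N a \<Psi> i (x(i := u)) \<le> payoff N a \<Psi> i (x(i := x i))}"

definition BNE :: "nat \<Rightarrow> (nat \<Rightarrow> nat) \<Rightarrow> pmat measure \<Rightarrow> mixed set" where
  "BNE N a Q = {x \<in> strat_profiles N a. \<forall>i\<in>{1..N}. \<forall>u\<in>strat_simplex (a i).
      (\<integral>P. payoff N a P i (x(i := u)) \<partial>Q) \<le> (\<integral>P. payoff N a P i (x(i := x i)) \<partial>Q)}"

definition ROE :: "nat \<Rightarrow> (nat \<Rightarrow> nat) \<Rightarrow> pmat set \<Rightarrow> mixed set" where
  "ROE N a U = {x \<in> strat_profiles N a. \<forall>i\<in>{1..N}. \<forall>u\<in>strat_simplex (a i).
      (INF P\<in>U. ereal (payoff N a P i (x(i := u)))) \<le> (INF P\<in>U. ereal (payoff N a P i (x(i := x i))))}"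

text \<open>W vec(P) \<le> h, with W having m rows whose columns are indexed like vec(P).\<close>
definition lin_le :: "nat \<Rightarrow> (nat \<Rightarrow> nat) \<Rightarrow> nat \<Rightarrow> (nat \<Rightarrow> nat \<times> (nat \<Rightarrow> nat) \<Rightarrow> real)
    \<Rightarrow> (nat \<Rightarrow> real) \<Rightarrow> pmat \<Rightarrow> bool" where
  "lin_le N a m W h P \<longleftrightarrow> (\<forall>r\<in>{1..m}. (\<Sum>x\<in>idx N a. W r x * P x) \<le> h r)"

definition F_mean :: "nat \<Rightarrow> (nat \<Rightarrow> nat) \<Rightarrow> pmat \<Rightarrow> pmat measure set" where
  "F_mean N a \<Psi> = {Q. distr_on (pmat_space N a) Q \<and> has_mean N a Q
      \<and> (\<forall>x\<in>idx N a. mean N a Q x = \<Psi> x)}"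

definition F_moment :: "nat \<Rightarrow> (nat \<Rightarrow> nat) \<Rightarrow> nat \<Rightarrow> (nat \<Rightarrow> nat \<times> (nat \<Rightarrow> nat) \<Rightarrow> real)
    \<Rightarrow> (nat \<Rightarrow> real) \<Rightarrow> pmat measure set" where
  "F_moment N a m W h = {Q. distr_on (pmat_space N a) Q \<and> has_mean N a Q
      \<and> measure Q {P \<in> space Q. lin_le N a m W h (mean N a Q)} = 1}"

definition U_set :: "nat \<Rightarrow> (nat \<Rightarrow> nat) \<Rightarrow> nat \<Rightarrow> (nat \<Rightarrow> nat \<times> (nat \<Rightarrow> nat) \<Rightarrow> real)
    \<Rightarrow> (nat \<Rightarrow> real) \<Rightarrow> pmat set" where
  "U_set N a m W h = {P \<in> matrices N a. lin_le N a m W h P}"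

end

theory Submission
  imports Defs
begin

text \<open>With risk level 1, CVaR is the expectation, and the expected payoff is the payoff of
the mean matrix. So each player's worst-case CVaR over an ambiguity set F is the worst-case
payoff over the set of means of F. A risk-neutral distributionally robust game is therefore
the robust game with uncertainty set mean ` F. The three ambiguity sets of the theorem have
as mean sets a single matrix (Nash), the mean of Q (Bayes), and the polyhedron U (robust).
The last case holds because point masses realise every matrix as a mean.\<close>

lemma integral_max_diff_eq:
  fixes L :: "'a \<Rightarrow> real"
  assumes "prob_space Q" "integrable Q L"
  shows "(\<integral>w. max (L w - z) 0 \<partial>Q) = (\<integral>w. L w \<partial>Q) - z + (\<integral>w. max (z - L w) 0 \<partial>Q)"
proof -
  interpret prob_space Q by fact
  have "(\<lambda>w. max (L w - z) 0) = (\<lambda>w. (L w - z) + max (z - L w) 0)"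
    by (auto simp: max_def)
  then show ?thesis
    using assms(2) by (simp add: Bochner_Integration.integral_add prob_space)
qed

lemma cvar_one_eq_integral:
  assumes "prob_space Q" "integrable Q L"
  shows "cvar Q 1 L = (\<integral>w. L w \<partial>Q)"
proof -
  interpret prob_space Q by fact
  define f where "f z = z + (\<integral>w. max (L w - z) 0 \<partial>Q)" for z
  have f_eq: "f z = (\<integral>w. L w \<partial>Q) + (\<integral>w. max (z - L w) 0 \<partial>Q)" for z
    using integral_max_diff_eq[OF assms] by (simp add: f_def)
  have lower: "(\<integral>w. L w \<partial>Q) \<le> f z" for z
    unfolding f_eq by (simp add: integral_nonneg_AE)
  \<comment> \<open>the infimum is approached as z \<rightarrow> -\<infinity>, by dominated convergence with bound |L|\<close>
  have "(\<lambda>n. \<integral>w. max (- real n - L w) 0 \<partial>Q) \<longlonglongrightarrow> (\<integral>w. 0 \<partial>Q)"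
  proof (rule integral_dominated_convergence[where w="\<lambda>w. \<bar>L w\<bar>"])
    show "(\<lambda>w. max (- real n - L w) 0) \<in> borel_measurable Q" for n
      using assms(2) by auto
    show "integrable Q (\<lambda>w. \<bar>L w\<bar>)" using assms(2) by auto
    show "AE w in Q. (\<lambda>n. max (- real n - L w) 0) \<longlonglongrightarrow> 0"
    proof (rule AE_I2)
      fix w
      obtain n0 :: nat where "- L w \<le> real n0" using real_arch_simple by metis
      then have "\<forall>n\<ge>n0. max (- real n - L w) 0 = 0" by auto
      then show "(\<lambda>n. max (- real n - L w) 0) \<longlonglongrightarrow> 0"
        by (intro tendsto_eventually) (auto simp: eventually_sequentially)
    qed
  qed auto
  then have "(\<lambda>n. f (- real n)) \<longlonglongrightarrow> (\<integral>w. L w \<partial>Q)"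
    unfolding f_eq using tendsto_add[OF tendsto_const] by fastforce
  moreover have "bdd_below (range f)" using lower by (meson bdd_belowI2)
  ultimately have "(INF z. f z) = (\<integral>w. L w \<partial>Q)"
    by (intro antisym LIMSEQ_le_const cINF_greatest lower) (auto intro: cINF_lower)
  then show ?thesis unfolding cvar_def f_def by simp
qed

lemma payoff_cong:
  assumes "i \<in> {1..N}" "\<forall>x\<in>idx N a. P x = P' x"
  shows "payoff N a P i y = payoff N a P' i y"
  unfolding payoff_def using assms by (intro sum.cong) (auto simp: idx_def)

lemma
  assumes "has_mean N a Q" "i \<in> {1..N}"
  shows integrable_payoff: "integrable Q (\<lambda>P. payoff N a P i y)"
    and integral_payoff_eq_payoff_mean:
      "(\<integral>P. payoff N a P i y \<partial>Q) = payoff N a (mean N a Q) i y"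
proof -
  have idx: "j \<in> profiles N a \<Longrightarrow> (i, j) \<in> idx N a" for j
    using assms(2) by (simp add: idx_def)
  have int: "j \<in> profiles N a \<Longrightarrow> integrable Q (\<lambda>P. P (i, j))" for j
    using assms(1) idx unfolding has_mean_def by auto
  show "integrable Q (\<lambda>P. payoff N a P i y)"
    unfolding payoff_def using int by (intro Bochner_Integration.integrable_sum) auto
  show "(\<integral>P. payoff N a P i y \<partial>Q) = payoff N a (mean N a Q) i y"
    unfolding payoff_def using int idx
    by (subst Bochner_Integration.integral_sum) (auto simp: mean_def intro!: sum.cong)
qed

lemma cvar_one_neg_payoff:
  assumes "distr_on (pmat_space N a) Q" "has_mean N a Q" "i \<in> {1..N}"
  shows "cvar Q 1 (\<lambda>P. - payoff N a P i y) = - payoff N a (mean N a Q) i y"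
  using assms cvar_one_eq_integral[of Q "\<lambda>P. - payoff N a P i y"]
    integrable_payoff integral_payoff_eq_payoff_mean
  by (simp add: distr_on_def)

lemma
  assumes "P \<in> matrices N a"
  shows distr_on_return: "distr_on (pmat_space N a) (return (pmat_space N a) P)"
    and has_mean_return: "has_mean N a (return (pmat_space N a) P)"
    and mean_return: "mean N a (return (pmat_space N a) P) = P"
proof -
  let ?M = "pmat_space N a"
  have P: "P \<in> space ?M" using assms by (simp add: matrices_def)
  show "distr_on ?M (return ?M P)" using P by (simp add: distr_on_def prob_space_return)
  have meas: "x \<in> idx N a \<Longrightarrow> (\<lambda>P. P x) \<in> borel_measurable ?M" for x
    unfolding pmat_space_def by (rule measurable_component_singleton)
  have "x \<in> idx N a \<Longrightarrow> integrable (return ?M P) (\<lambda>P. P x)" for x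
    using meas[of x] P
    by (subst integrable_iff_bounded)
      (auto simp: nn_integral_return measurable_cong_sets[OF sets_return refl])
  then show "has_mean N a (return ?M P)" by (simp add: has_mean_def)
  have "P \<in> extensional (idx N a)" using P by (simp add: pmat_space_def space_PiM PiE_def)
  then show "mean N a (return ?M P) = P"
    unfolding mean_def using meas P by (intro ext) (auto simp: integral_return extensional_def)
qed

lemma SUP_cvar_one_eq_neg_INF_mean:
  assumes "\<forall>Q\<in>F. distr_on (pmat_space N a) Q \<and> has_mean N a Q" "i \<in> {1..N}"
  shows "(SUP Q\<in>F. ereal (cvar Q 1 (\<lambda>P. - payoff N a P i y)))
    = - (INF P\<in>mean N a ` F. ereal (payoff N a P i y))"
proof -
  have "(SUP Q\<in>F. ereal (cvar Q 1 (\<lambda>P. - payoff N a P i y)))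
      = (SUP Q\<in>F. - ereal (payoff N a (mean N a Q) i y))"
    using assms by (intro SUP_cong refl) (simp add: cvar_one_neg_payoff)
  also have "\<dots> = - (INF P\<in>mean N a ` F. ereal (payoff N a P i y))"
    by (subst ereal_SUP_uminus_eq[symmetric]) (simp add: image_comp)
  finally show ?thesis .
qed

lemma DROE_risk_neutral_eq_ROE:
  assumes "\<forall>Q\<in>F. distr_on (pmat_space N a) Q \<and> has_mean N a Q"
  shows "DROE N a F (\<lambda>_. 1) = ROE N a (mean N a ` F)"
  unfolding DROE_def ROE_def using SUP_cvar_one_eq_neg_INF_mean[OF assms] by auto

lemma ROE_singleton_eq_NE: "ROE N a {P} = NE N a P"
  unfolding ROE_def NE_def by simp

lemma NE_cong:
  assumes "\<forall>x\<in>idx N a. P x = P' x"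
  shows "NE N a P = NE N a P'"
  unfolding NE_def using payoff_cong[OF _ assms] by simp

lemma BNE_eq_NE_mean:
  assumes "has_mean N a Q"
  shows "BNE N a Q = NE N a (mean N a Q)"
  unfolding BNE_def NE_def using integral_payoff_eq_payoff_mean[OF assms] by simp

lemma mean_image_F_mean: "mean N a ` F_mean N a \<Psi> = {restrict \<Psi> (idx N a)}"
proof -
  let ?P = "restrict \<Psi> (idx N a)"
  have "?P \<in> matrices N a"
    by (simp add: matrices_def pmat_space_def space_PiM)
  then have "return (pmat_space N a) ?P \<in> F_mean N a \<Psi>"
    by (simp add: F_mean_def distr_on_return has_mean_return mean_return)
  moreover have "mean N a Q = ?P" if "Q \<in> F_mean N a \<Psi>" for Q
    using that by (auto simp: F_mean_def mean_def)
  ultimately show ?thesis by (auto intro!: image_eqI)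
qed

lemma mean_image_F_moment: "mean N a ` F_moment N a m W h = U_set N a m W h"
proof (intro set_eqI iffI)
  fix P assume "P \<in> mean N a ` F_moment N a m W h"
  then obtain Q where Q: "Q \<in> F_moment N a m W h" and P: "P = mean N a Q" by auto
  \<comment> \<open>the event in the definition of F_moment does not depend on the sample, so it has
      probability 1 only if it is the whole space\<close>
  then have "lin_le N a m W h P"
    by (cases "lin_le N a m W h P") (auto simp: F_moment_def)
  moreover have "P \<in> matrices N a"
    using P by (simp add: matrices_def pmat_space_def space_PiM mean_def)
  ultimately show "P \<in> U_set N a m W h" by (simp add: U_set_def)
next
  fix P assume "P \<in> U_set N a m W h"
  then have P: "P \<in> matrices N a" "lin_le N a m W h P" by (auto simp: U_set_def)
  have "prob_space (return (pmat_space N a) P)"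
    using distr_on_return[OF P(1)] by (simp add: distr_on_def)
  then have "return (pmat_space N a) P \<in> F_moment N a m W h"
    using P prob_space.prob_space
    by (fastforce simp: F_moment_def distr_on_return has_mean_return mean_return)
  then show "P \<in> mean N a ` F_moment N a m W h" using mean_return[OF P(1)] by force
qed

theorem theorem1:
  fixes N :: nat and a :: "nat \<Rightarrow> nat" and \<Psi> :: pmat and Q :: "pmat measure"
    and m :: nat and W :: "nat \<Rightarrow> nat \<times> (nat \<Rightarrow> nat) \<Rightarrow> real" and h :: "nat \<Rightarrow> real"
  assumes "\<forall>k\<in>{1..N}. 1 \<le> a k"
  shows "DROE N a (F_mean N a \<Psi>) (\<lambda>_. 1) = NE N a \<Psi>
    \<and> (distr_on (pmat_space N a) Q \<and> has_mean N a Q \<longrightarrow>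
           DROE N a {Q} (\<lambda>_. 1) = BNE N a Q)
    \<and> DROE N a (F_moment N a m W h) (\<lambda>_. 1) = ROE N a (U_set N a m W h)"
proof (intro conjI impI)
  show "DROE N a (F_mean N a \<Psi>) (\<lambda>_. 1) = NE N a \<Psi>"
  proof -
    have "\<forall>Q\<in>F_mean N a \<Psi>. distr_on (pmat_space N a) Q \<and> has_mean N a Q"
      by (simp add: F_mean_def)
    then show ?thesis
      by (simp add: DROE_risk_neutral_eq_ROE mean_image_F_mean ROE_singleton_eq_NE NE_cong)
  qed
  show "DROE N a {Q} (\<lambda>_. 1) = BNE N a Q"
    if "distr_on (pmat_space N a) Q \<and> has_mean N a Q"
    using that by (simp add: DROE_risk_neutral_eq_ROE ROE_singleton_eq_NE BNE_eq_NE_mean)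
  show "DROE N a (F_moment N a m W h) (\<lambda>_. 1) = ROE N a (U_set N a m W h)"
    by (simp add: DROE_risk_neutral_eq_ROE F_moment_def flip: mean_image_F_moment)
qed

end
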